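(* For $n\in\mathbb{N}_{\geq 1}$ let $c_n$ denote the minimal Colless index among all rooted binary trees with $n$ leaves, and let $k_n=\lceil\log_2(n)\rceil$. Then $$c_n=\sum_{i=0}^{k_n-2}\frac{s(2^{i-k_n+1}\cdot n)}{2^{i-k_n+1}},$$ where $s(x)=\min_{z\in\mathbb{Z}}|x-z|$ is the distance from $x$ to the nearest integer (an empty sum is $0$).
   Context: A rooted binary tree with $n\geq 2$ leaves is a rooted tree whose root has degree 2 and all other internal nodes have degree 3; for $n=1$ it is a single node. For an internal node $v$ with children $v_1,v_2$, let $\kappa(v_i)$ be the number of leaves descending from $v_i$ ($1$ if $v_i$ is a leaf). The Colless index of $T$ is $\mathcal{C}(T)=\sum_{v}|\kappa(v_1)-\kappa(v_2)|$ over all internal nodes $v$. *)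

theory Defs
  imports "HOL-Analysis.Analysis"
begin

datatype bintree = Leaf | Node bintree bintree

fun leaves :: "bintree \<Rightarrow> nat" where
  "leaves Leaf = 1"
| "leaves (Node l r) = leaves l + leaves r"

fun colless :: "bintree \<Rightarrow> nat" where
  "colless Leaf = 0"
| "colless (Node l r) =
     nat \<bar>int (leaves l) - int (leaves r)\<bar> + colless l + colless r"

definition min_colless :: "nat \<Rightarrow> nat" where
  "min_colless n = Min {colless t | t. leaves t = n}"

definition dist_int :: "real \<Rightarrow> real" where
  "dist_int x = (INF z::int. \<bar>x - of_int z\<bar>)"

end

theory Submission
  imports Defs
begin

(* The summand for i = k - 1 - j is 2^j s(n / 2^j), the distance from n to the nearest multiple
   of 2^j, so the right-hand side is c(n) = sum of these distances over all j with 2^j < n.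
   Halving the modulus shows c(n) = c(floor(n/2)) + c(ceil(n/2)) + (n mod 2), the recursion of the
   Colless index of the maximally balanced tree, so that tree attains c(n). Conversely
   c(a + b) <= c(a) + c(b) + |a - b| by strong induction on a + b, writing a + b as the two nearly
   equal parts floor(a/2) + ceil(b/2) and ceil(a/2) + floor(b/2); by induction over the tree,
   every tree with n leaves has Colless index at least c(n). *)

definition dist_pow2 :: "nat \<Rightarrow> nat \<Rightarrow> nat" where
  "dist_pow2 j n = min (n mod 2^j) (2^j - n mod 2^j)"

definition colless_sum :: "nat \<Rightarrow> nat" where
  "colless_sum n = (\<Sum>j | 2^j < n. dist_pow2 j n)"

lemma finite_pow2_less: "finite {j. (2::nat)^j < n}"
  by (rule finite_subset[of _ "{..<n}"]) (auto intro: less_trans[OF less_exp])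

lemma dist_pow2_0 [simp]: "dist_pow2 0 n = 0"
  by (simp add: dist_pow2_def)

lemma dist_pow2_self [simp]: "dist_pow2 j (2^j) = 0"
  by (simp add: dist_pow2_def)

lemma dist_pow2_Suc_even: "dist_pow2 (Suc j) (2 * m) = 2 * dist_pow2 j m"
  by (simp add: dist_pow2_def mod_mult_mult1 nat_mult_min_right diff_mult_distrib2)

lemma dist_pow2_Suc_odd:
  assumes "j > 0"
  shows "dist_pow2 (Suc j) (2 * m + 1) = dist_pow2 j m + dist_pow2 j (m + 1)"
proof -
  define r where "r = m mod 2^j"
  obtain Q where Q: "(2::nat)^j = 2 * Q"
    using assms by (cases j) auto
  have "r < 2 * Q"
    using Q by (simp add: r_def flip: Q)
  have "(2 * m + 1) mod 2^Suc j = 2 * r + 1"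
    by (simp add: r_def mod_mult2_eq)
  then have "dist_pow2 (Suc j) (2 * m + 1) = min (2 * r + 1) (4 * Q - (2 * r + 1))"
    by (simp add: dist_pow2_def Q)
  also have "\<dots> = min r (2 * Q - r) + min (Suc r) (2 * Q - Suc r)"
  proof (cases "r < Q")
    case True
    then show ?thesis by (simp add: min_def)
  next
    case False
    with \<open>r < 2 * Q\<close> have "min (2 * r + 1) (4 * Q - (2 * r + 1)) = 4 * Q - (2 * r + 1)"
      "min r (2 * Q - r) = 2 * Q - r" "min (Suc r) (2 * Q - Suc r) = 2 * Q - Suc r"
      by simp_all
    with False \<open>r < 2 * Q\<close> show ?thesis by simp
  qed
  also have "min r (2 * Q - r) = dist_pow2 j m"
    by (simp add: dist_pow2_def Q r_def)
  also have "min (Suc r) (2 * Q - Suc r) = dist_pow2 j (m + 1)"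
    using \<open>r < 2 * Q\<close> mod_Suc[of m "2^j"] by (auto simp: dist_pow2_def Q r_def)
  finally show ?thesis .
qed

lemma dist_pow2_Suc:
  "dist_pow2 (Suc j) n =
     dist_pow2 j (n div 2) + dist_pow2 j ((n + 1) div 2) + (if j = 0 then n mod 2 else 0)"
proof (cases "even n")
  case True
  then obtain m where "n = 2 * m" by blast
  then show ?thesis by (simp add: dist_pow2_Suc_even)
next
  case False
  then obtain m where n: "n = 2 * m + 1" by (blast elim: oddE)
  show ?thesis
  proof (cases "j = 0")
    case True
    then show ?thesis by (simp add: n dist_pow2_def)
  next
    case False
    then show ?thesis using dist_pow2_Suc_odd[of j m] by (simp add: n)
  qed
qed

lemma pow2_less_split:
  assumes "n \<ge> 2"
  shows "{j. (2::nat)^j < n} = insert 0 (Suc ` {j. 2^j < (n + 1) div 2})"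
proof -
  have "2^j < (n + 1) div 2 \<longleftrightarrow> 2^Suc j < n" for j :: nat
    by auto
  show ?thesis
  proof (rule set_eqI)
    fix x
    show "x \<in> {j. 2^j < n} \<longleftrightarrow> x \<in> insert 0 (Suc ` {j. 2^j < (n + 1) div 2})"
      using assms \<open>\<And>j. 2^j < (n + 1) div 2 \<longleftrightarrow> 2^Suc j < n\<close> by (cases x) auto
  qed
qed

lemma colless_sum_eq_sum_pow2_less:
  assumes "m \<le> M" "M \<le> m + 1"
  shows "(\<Sum>j | 2^j < M. dist_pow2 j m) = colless_sum m"
  unfolding colless_sum_def
proof (rule sum.mono_neutral_right[OF finite_pow2_less])
  show "{j. 2^j < m} \<subseteq> {j. 2^j < M}"
    using assms by auto
  show "\<forall>j \<in> {j. 2^j < M} - {j. 2^j < m}. dist_pow2 j m = 0"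
  proof
    fix j
    assume "j \<in> {j. 2^j < M} - {j. 2^j < m}"
    then have "2^j = m"
      using assms by simp
    then show "dist_pow2 j m = 0"
      by auto
  qed
qed

lemma colless_sum_halves:
  assumes "n \<ge> 2"
  shows "colless_sum n = colless_sum (n div 2) + colless_sum ((n + 1) div 2) + n mod 2"
proof -
  let ?J = "{j. 2^j < (n + 1) div 2}"
  have "colless_sum n = (\<Sum>j \<in> ?J. dist_pow2 (Suc j) n)"
    by (simp add: colless_sum_def pow2_less_split[OF assms] finite_pow2_less sum.reindex)
  also have "\<dots> = (\<Sum>j \<in> ?J. dist_pow2 j (n div 2)) + (\<Sum>j \<in> ?J. dist_pow2 j ((n + 1) div 2))
      + (\<Sum>j \<in> ?J. if j = 0 then n mod 2 else 0)"
    by (simp add: dist_pow2_Suc sum.distrib)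
  also have "(\<Sum>j \<in> ?J. if j = 0 then n mod 2 else 0) = n mod 2"
    using assms by (simp add: finite_pow2_less) presburger
  finally show ?thesis
    using colless_sum_eq_sum_pow2_less[of "n div 2" "(n + 1) div 2"] by (simp add: colless_sum_def)
qed

lemma colless_sum_eq_0:
  assumes "n \<le> 2"
  shows "colless_sum n = 0"
proof -
  have "dist_pow2 j n = 0" if "2^j < n" for j
    using assms that order_less_le_trans[of "2^j" n 2] by (cases j) auto
  then show ?thesis
    unfolding colless_sum_def by (intro sum.neutral) auto
qed

lemma colless_sum_add_near:
  assumes "u + v \<ge> 2" "u \<le> v + 1" "v \<le> u + 1"
  shows "colless_sum (u + v) = colless_sum u + colless_sum v + (u + v) mod 2"
proof -
  have "(u + v) div 2 = min u v" "(u + v + 1) div 2 = max u v"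
    using assms(2,3) by (simp_all add: min_def max_def) arith+
  then show ?thesis
    using colless_sum_halves[OF assms(1)] by (simp add: min_def max_def split: if_splits)
qed

(* The case a = 1 of colless_sum_add_le, where colless_sum_halves does not apply to a. *)
lemma colless_sum_Suc_le: "b \<ge> 1 \<Longrightarrow> colless_sum (b + 1) + 1 \<le> colless_sum b + b"
proof (induction b rule: less_induct)
  case (less b)
  show ?case
  proof (cases "b = 1")
    case True
    then show ?thesis by (simp add: colless_sum_eq_0)
  next
    case False
    with less.prems have "b \<ge> 2" by simp
    have "(b + 1) div 2 + (b div 2 + 1) = b + 1"
      by presburger
    then have "colless_sum (b + 1) = colless_sum ((b + 1) div 2) + colless_sum (b div 2 + 1) + (b + 1) mod 2"
      using colless_sum_add_near[of "(b + 1) div 2" "b div 2 + 1"] \<open>b \<ge> 2\<close> by simp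
    moreover have "colless_sum (b div 2 + 1) + 1 \<le> colless_sum (b div 2) + b div 2"
      using less.IH[of "b div 2"] \<open>b \<ge> 2\<close> by simp
    moreover have "colless_sum b = colless_sum (b div 2) + colless_sum ((b + 1) div 2) + b mod 2"
      using colless_sum_halves[OF \<open>b \<ge> 2\<close>] .
    moreover have "b div 2 + (b + 1) mod 2 \<le> b + b mod 2"
      using \<open>b \<ge> 2\<close> by presburger
    ultimately show ?thesis
      by linarith
  qed
qed

lemma cross_halves_abs_le:
  "\<bar>int (a div 2) - int ((b + 1) div 2)\<bar> + \<bar>int ((a + 1) div 2) - int (b div 2)\<bar> + int ((a + b) mod 2)
     \<le> \<bar>int a - int b\<bar> + int (a mod 2) + int (b mod 2)"
  by (cases "even a"; cases "even b") (auto elim!: evenE oddE simp: abs_if)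

lemma Suc_div_2: "(n + 1) div 2 = n div 2 + n mod (2::nat)"
  by presburger

lemma colless_sum_add_le:
  "int (colless_sum (a + b)) \<le> int (colless_sum a) + int (colless_sum b) + \<bar>int a - int b\<bar>"
proof (induction "a + b" arbitrary: a b rule: less_induct)
  case less
  consider "a = 0 \<or> b = 0" | "a = 1" "b \<ge> 1" | "b = 1" "a \<ge> 1" | "a \<ge> 2" "b \<ge> 2"
    by linarith
  then show ?case
  proof cases
    case 1
    then show ?thesis by (auto simp: colless_sum_eq_0)
  next
    case 2
    then show ?thesis using colless_sum_Suc_le[of b] by (simp add: colless_sum_eq_0)
  next
    case 3
    then show ?thesis using colless_sum_Suc_le[of a] by (simp add: colless_sum_eq_0)
  next
    case 4
    define u where "u = a div 2 + (b + 1) div 2"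
    define v where "v = (a + 1) div 2 + b div 2"
    have "a div 2 \<ge> 1" "b div 2 \<ge> 1" "a mod 2 \<le> 1" "b mod 2 \<le> 1"
      using 4 by auto
    moreover have "2 * (a div 2) + a mod 2 = a" "2 * (b div 2) + b mod 2 = b"
      by simp_all
    ultimately have "u + v = a + b" "u \<ge> 1" "v \<ge> 1" "u \<le> v + 1" "v \<le> u + 1"
      unfolding u_def v_def Suc_div_2 by linarith+
    then have "colless_sum (a + b) = colless_sum u + colless_sum v + (a + b) mod 2"
      using colless_sum_add_near[of u v] by simp
    moreover have "int (colless_sum u) \<le> int (colless_sum (a div 2)) + int (colless_sum ((b + 1) div 2))
        + \<bar>int (a div 2) - int ((b + 1) div 2)\<bar>"
      using less[of "a div 2" "(b + 1) div 2"] \<open>u + v = a + b\<close> \<open>v \<ge> 1\<close> by (simp add: u_def)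
    moreover have "int (colless_sum v) \<le> int (colless_sum ((a + 1) div 2)) + int (colless_sum (b div 2))
        + \<bar>int ((a + 1) div 2) - int (b div 2)\<bar>"
      using less[of "(a + 1) div 2" "b div 2"] \<open>u + v = a + b\<close> \<open>u \<ge> 1\<close> by (simp add: v_def)
    moreover have "colless_sum a = colless_sum (a div 2) + colless_sum ((a + 1) div 2) + a mod 2"
      "colless_sum b = colless_sum (b div 2) + colless_sum ((b + 1) div 2) + b mod 2"
      using colless_sum_halves 4 by simp_all
    ultimately show ?thesis
      using cross_halves_abs_le[of a b] by linarith
  qed
qed

lemma colless_sum_le_colless: "colless_sum (leaves t) \<le> colless t"
proof (induction t)
  case Leaf
  then show ?case by (simp add: colless_sum_eq_0)
next
  case (Node l r)
  then show ?case
    using colless_sum_add_le[of "leaves l" "leaves r"] by simp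
qed

fun balanced_tree :: "nat \<Rightarrow> bintree" where
  "balanced_tree n =
     (if n \<le> 1 then Leaf else Node (balanced_tree (n div 2)) (balanced_tree ((n + 1) div 2)))"

declare balanced_tree.simps [simp del]

lemma leaves_balanced_tree: "n \<ge> 1 \<Longrightarrow> leaves (balanced_tree n) = n"
  by (induction n rule: balanced_tree.induct) (subst balanced_tree.simps, auto)

lemma colless_balanced_tree: "n \<ge> 1 \<Longrightarrow> colless (balanced_tree n) = colless_sum n"
proof (induction n rule: balanced_tree.induct)
  case (1 n)
  show ?case
  proof (cases "n \<le> 1")
    case True
    then show ?thesis by (simp add: balanced_tree.simps colless_sum_eq_0)
  next
    case False
    have "nat \<bar>int (n div 2) - int ((n + 1) div 2)\<bar> = n mod 2"
      by (cases "even n") (auto elim!: evenE oddE)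
    with False 1 show ?thesis
      by (simp add: balanced_tree.simps[of n] leaves_balanced_tree colless_sum_halves)
  qed
qed

lemma leaves_pos: "leaves t \<ge> 1"
  by (induction t) auto

lemma colless_le_leaves_sq: "colless t \<le> leaves t ^ 2"
proof (induction t)
  case Leaf
  then show ?case by simp
next
  case (Node l r)
  have "leaves l \<le> leaves l * leaves r" "leaves r \<le> leaves l * leaves r"
    using leaves_pos[of l] leaves_pos[of r] by simp_all
  then have "nat \<bar>int (leaves l) - int (leaves r)\<bar> \<le> 2 * leaves l * leaves r"
    by linarith
  with Node show ?case
    by (simp add: power2_eq_square algebra_simps)
qed

lemma min_colless_eq_colless_sum:
  assumes "n \<ge> 1"
  shows "min_colless n = colless_sum n"
  unfolding min_colless_def
proof (rule Min_eqI)
  show "finite {colless t |t. leaves t = n}"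
    by (rule finite_subset[of _ "{..n^2}"]) (auto intro: colless_le_leaves_sq)
  show "colless_sum n \<le> c" if "c \<in> {colless t |t. leaves t = n}" for c
  proof -
    from that obtain t where "c = colless t" "leaves t = n"
      by blast
    then show ?thesis
      using colless_sum_le_colless[of t] by simp
  qed
  show "colless_sum n \<in> {colless t |t. leaves t = n}"
    using assms leaves_balanced_tree colless_balanced_tree
    by (intro CollectI exI[of _ "balanced_tree n"]) simp
qed

lemma dist_int_eq_min:
  assumes "of_int q \<le> x" "x \<le> of_int q + 1"
  shows "dist_int x = min (x - of_int q) (of_int q + 1 - x)"
  unfolding dist_int_def
proof (rule cInf_eq_minimum)
  have "min (x - of_int q) (of_int q + 1 - x) \<in> {\<bar>x - of_int q\<bar>, \<bar>x - of_int (q + 1)\<bar>}"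
    using assms by (auto simp: min_def)
  then show "min (x - of_int q) (of_int q + 1 - x) \<in> range (\<lambda>z. \<bar>x - of_int z\<bar>)"
    by blast
  show "min (x - of_int q) (of_int q + 1 - x) \<le> d" if d: "d \<in> range (\<lambda>z. \<bar>x - of_int z\<bar>)" for d
  proof -
    obtain z where dz: "d = \<bar>x - of_int z\<bar>"
      using d by blast
    have "z \<le> q \<or> q + 1 \<le> z"
      by linarith
    then have "of_int z \<le> (of_int q :: real) \<or> of_int q + 1 \<le> (of_int z :: real)"
      by (metis of_int_1 of_int_add of_int_le_iff)
    then show ?thesis
      using dz assms by auto
  qed
qed

lemma dist_mod_eq_dist_int:
  assumes "P > 0"
  shows "real (min (n mod P) (P - n mod P)) = real P * dist_int (real n / real P)"
proof -
  define r where "r = n mod P"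
  have "r < P"
    using assms by (simp add: r_def)
  have "real n / real P = of_int (int (n div P)) + real r / real P"
    unfolding r_def of_int_of_nat_eq by (rule of_nat_of_nat_div_aux)
  moreover have "real r / real P \<le> 1"
    using \<open>r < P\<close> by simp
  ultimately have "dist_int (real n / real P) = min (real r / real P) (1 - real r / real P)"
    using dist_int_eq_min[of "int (n div P)" "real n / real P"] by simp
  also have "real P * \<dots> = min (real r) (real P - real r)"
    using assms by (simp add: min_mult_distrib_left right_diff_distrib)
  finally show ?thesis
    using \<open>r < P\<close> by (simp add: r_def of_nat_min of_nat_diff)
qed

lemma dist_pow2_eq_dist_int: "real (dist_pow2 j n) = 2^j * dist_int (real n / 2^j)"
  using dist_mod_eq_dist_int[of "2^j" n]
  by (simp only: dist_pow2_def of_nat_power of_nat_numeral zero_less_numeral zero_less_power)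

lemma pow2_less_iff_less_ceiling_log:
  assumes "n \<ge> 1"
  shows "(2::nat)^j < n \<longleftrightarrow> int j < \<lceil>log 2 (real n)\<rceil>"
proof -
  have "n > 0"
    using assms by simp
  then have "(2::nat)^j < n \<longleftrightarrow> real j < log 2 (real n)"
    using less_log2_of_power[of j n] log2_of_power_le[of n j] by (meson linorder_not_le)
  then show ?thesis
    by (simp add: less_ceiling_iff)
qed

lemma sum_powi_reflect:
  fixes f :: "real \<Rightarrow> real"
  assumes "k \<ge> 0"
  shows "(\<Sum>i\<in>{0..k - 2}. f (2 powi (i - k + 1))) = (\<Sum>j\<in>{1..<nat k}. f (inverse (2^j)))"
proof (rule sum.reindex_bij_witness[where i = "\<lambda>j. k - 1 - int j" and j = "\<lambda>i. nat (k - 1 - i)"])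
  fix i
  assume "i \<in> {0..k - 2}"
  then have "i - k + 1 = - int (nat (k - 1 - i))"
    by simp
  then have "(2::real) powi (i - k + 1) = inverse (2 ^ nat (k - 1 - i))"
    by (simp only: power_int_minus power_int_of_nat)
  then show "f (inverse (2 ^ nat (k - 1 - i))) = f (2 powi (i - k + 1))"
    by simp
qed (use assms in auto)

theorem theorem2:
  fixes n :: nat
  assumes "n \<ge> 1"
  defines "k \<equiv> \<lceil>log 2 (real n)\<rceil>"
  shows "real (min_colless n) =
    (\<Sum>i\<in>{0..k - 2}. dist_int ((2::real) powi (i - k + 1) * real n) / (2::real) powi (i - k + 1))"
proof -
  have "log 2 (real n) \<ge> 0"
    using assms by simp
  then have "k \<ge> 0"
    by (simp add: k_def)
  have "(2::nat)^j < n \<longleftrightarrow> j < nat k" for j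
    using pow2_less_iff_less_ceiling_log[OF assms(1), of j] by (simp add: k_def zless_nat_eq_int_zless)
  then have "{j. (2::nat)^j < n} = {..<nat k}"
    by auto
  then have "real (min_colless n) = (\<Sum>j<nat k. real (dist_pow2 j n))"
    using assms by (simp add: min_colless_eq_colless_sum colless_sum_def)
  also have "\<dots> = (\<Sum>j\<in>{1..<nat k}. real (dist_pow2 j n))"
    by (rule sum.mono_neutral_right) (auto simp: not_le)
  also have "\<dots> = (\<Sum>j\<in>{1..<nat k}. dist_int (inverse (2^j) * real n) / inverse (2^j))"
    by (simp add: dist_pow2_eq_dist_int divide_inverse mult.commute)
  also have "\<dots> = (\<Sum>i\<in>{0..k - 2}. dist_int ((2::real) powi (i - k + 1) * real n) / (2::real) powi (i - k + 1))"
    using sum_powi_reflect[OF \<open>k \<ge> 0\<close>, of "\<lambda>x. dist_int (x * real n) / x"] by simp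
  finally show ?thesis .
qed

end
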